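(* For each SES $\sigma=(E,\#,\to,\triangleright)$ there is an RCES $\rho$ (over the same event set $E$) such that $\sigma$ and $\rho$ are transition equivalent.
   Context: SES: $\sigma=(E,\#,\to,\triangleright)$ with $\#\subseteq E^2$ irreflexive and symmetric, $\to\subseteq E^2$ an arbitrary binary relation, $\triangleright\subseteq E^3$ with $(c,d,t)\in\triangleright$ implying $c\to t$. $\mathrm{ic}(e)=\{e'\mid e'\to e\}$, $\mathrm{dc}(H,e)=\{e'\mid\exists d\in H.(e',d,e)\in\triangleright\}$. SES transitions: for $X,Y\subseteq E$, $X\to_s Y$ iff $X\subseteq Y$, $\neg(e\#e')$ for all $e,e'\in Y$, and $\mathrm{ic}(e)\setminus\mathrm{dc}(X,e)\subseteq X$ for all $e\in Y\setminus X$. Event structure for resolvable conflict (RCES): a pair $\rho=(E,\vdash)$ with $\vdash\subseteq 2^E\times 2^E$. For $X,Y\subseteq E$, $X\to_{rc}Y$ iff $X\subseteq Y$ and for every $Z\subseteq Y$ there is $W\subseteq X$ with $W\vdash Z$. For an event structure $\mu$ with transition relation $\to_\mu$ on subsets of its events, $\mathcal{C}(\mu)$ is the set of sets reachable from $\emptyset$ by finitely many $\to_\mu$-steps. Two such structures $\mu,\mu'$ are transition equivalent iff $\mathcal{C}(\mu)=\mathcal{C}(\mu')$ and for all $X,Y\in\mathcal{C}(\mu)$: $X\to_\mu Y$ iff $X\to_{\mu'}Y$. *)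

theory Defs
  imports Main
begin

definition ses :: "'a set \<Rightarrow> ('a \<times> 'a) set \<Rightarrow> ('a \<times> 'a) set \<Rightarrow> ('a \<times> 'a \<times> 'a) set \<Rightarrow> bool" where
  "ses E cfl en dis \<longleftrightarrow>
     cfl \<subseteq> E \<times> E \<and> irrefl cfl \<and> sym cfl \<and>
     en \<subseteq> E \<times> E \<and>
     dis \<subseteq> E \<times> E \<times> E \<and>
     (\<forall>c d t. (c, d, t) \<in> dis \<longrightarrow> (c, t) \<in> en)"

definition ic :: "('a \<times> 'a) set \<Rightarrow> 'a \<Rightarrow> 'a set" where
  "ic en e = {e'. (e', e) \<in> en}"

definition dc :: "('a \<times> 'a \<times> 'a) set \<Rightarrow> 'a set \<Rightarrow> 'a \<Rightarrow> 'a set" where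
  "dc dis H e = {e'. \<exists>d\<in>H. (e', d, e) \<in> dis}"

definition ses_trans :: "'a set \<Rightarrow> ('a \<times> 'a) set \<Rightarrow> ('a \<times> 'a) set \<Rightarrow> ('a \<times> 'a \<times> 'a) set
    \<Rightarrow> 'a set \<Rightarrow> 'a set \<Rightarrow> bool" where
  "ses_trans E cfl en dis X Y \<longleftrightarrow>
     X \<subseteq> E \<and> Y \<subseteq> E \<and> X \<subseteq> Y \<and>
     (\<forall>e\<in>Y. \<forall>e'\<in>Y. (e, e') \<notin> cfl) \<and>
     (\<forall>e\<in>Y - X. ic en e - dc dis X e \<subseteq> X)"

definition rces :: "'a set \<Rightarrow> ('a set \<times> 'a set) set \<Rightarrow> bool" where
  "rces E enab \<longleftrightarrow> enab \<subseteq> Pow E \<times> Pow E"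

definition rc_trans :: "'a set \<Rightarrow> ('a set \<times> 'a set) set \<Rightarrow> 'a set \<Rightarrow> 'a set \<Rightarrow> bool" where
  "rc_trans E enab X Y \<longleftrightarrow>
     X \<subseteq> E \<and> Y \<subseteq> E \<and> X \<subseteq> Y \<and>
     (\<forall>Z. Z \<subseteq> Y \<longrightarrow> (\<exists>W. W \<subseteq> X \<and> (W, Z) \<in> enab))"

definition configs :: "('a set \<Rightarrow> 'a set \<Rightarrow> bool) \<Rightarrow> 'a set set" where
  "configs T = {X. T\<^sup>*\<^sup>* {} X}"

definition trans_equiv :: "('a set \<Rightarrow> 'a set \<Rightarrow> bool) \<Rightarrow> ('a set \<Rightarrow> 'a set \<Rightarrow> bool) \<Rightarrow> bool" where
  "trans_equiv T T' \<longleftrightarrow>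
     configs T = configs T' \<and>
     (\<forall>X\<in>configs T. \<forall>Y\<in>configs T. T X Y \<longleftrightarrow> T' X Y)"

end

theory Submission
  imports Defs
begin

text \<open>Let \<open>W \<turnstile> Z\<close> hold iff \<open>Z\<close> is conflict-free and every event of \<open>Z - W\<close> has all its
  initial causes, except those dropped by events of \<open>W\<close>, inside \<open>W\<close>. Since \<open>dc\<close> is monotone in
  its set argument, \<open>W \<turnstile> Y\<close> for some \<open>W \<subseteq> X\<close> is equivalent to \<open>X \<turnstile> Y\<close>, and this is exactly
  the SES step \<open>X \<rightarrow>\<^sub>s Y\<close>. So the two transition relations coincide, and a fortiori so do
  the configurations. None of the SES axioms is needed.\<close>

definition ses_enabling :: "'a set \<Rightarrow> ('a \<times> 'a) set \<Rightarrow> ('a \<times> 'a) set \<Rightarrow> ('a \<times> 'a \<times> 'a) set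
    \<Rightarrow> ('a set \<times> 'a set) set" where
  "ses_enabling E cfl en dis = {(W, Z). W \<subseteq> E \<and> Z \<subseteq> E \<and> (\<forall>e\<in>Z. \<forall>e'\<in>Z. (e, e') \<notin> cfl)
      \<and> (\<forall>e\<in>Z - W. ic en e - dc dis W e \<subseteq> W)}"

lemma rces_ses_enabling: "rces E (ses_enabling E cfl en dis)"
  unfolding rces_def ses_enabling_def by blast

lemma dc_mono: "W \<subseteq> X \<Longrightarrow> dc dis W e \<subseteq> dc dis X e"
  unfolding dc_def by blast

lemma ses_trans_imp_ses_enabling:
  assumes "ses_trans E cfl en dis X Y" and "Z \<subseteq> Y"
  shows "(X, Z) \<in> ses_enabling E cfl en dis"
  using assms unfolding ses_trans_def ses_enabling_def by blast

lemma ses_enabling_imp_ses_trans: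
  assumes enabled: "(W, Y) \<in> ses_enabling E cfl en dis" and "W \<subseteq> X" "X \<subseteq> Y"
  shows "ses_trans E cfl en dis X Y"
proof -
  have "ic en e - dc dis X e \<subseteq> X" if "e \<in> Y - X" for e
  proof -
    have "e \<in> Y - W" using that \<open>W \<subseteq> X\<close> by blast
    then have "ic en e - dc dis W e \<subseteq> W" using enabled unfolding ses_enabling_def by blast
    then show ?thesis using dc_mono[OF \<open>W \<subseteq> X\<close>] \<open>W \<subseteq> X\<close> by blast
  qed
  then show ?thesis
    using enabled \<open>X \<subseteq> Y\<close> unfolding ses_trans_def ses_enabling_def by blast
qed

lemma rc_trans_ses_enabling: "rc_trans E (ses_enabling E cfl en dis) = ses_trans E cfl en dis"
proof (intro ext iffI)
  fix X Y
  assume rc: "rc_trans E (ses_enabling E cfl en dis) X Y"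
  then obtain W where "(W, Y) \<in> ses_enabling E cfl en dis" "W \<subseteq> X"
    unfolding rc_trans_def by blast
  moreover have "X \<subseteq> Y" using rc unfolding rc_trans_def by simp
  ultimately show "ses_trans E cfl en dis X Y" by (rule ses_enabling_imp_ses_trans)
next
  fix X Y
  assume ses: "ses_trans E cfl en dis X Y"
  then have "\<forall>Z. Z \<subseteq> Y \<longrightarrow> (\<exists>W. W \<subseteq> X \<and> (W, Z) \<in> ses_enabling E cfl en dis)"
    by (blast intro: ses_trans_imp_ses_enabling)
  with ses show "rc_trans E (ses_enabling E cfl en dis) X Y"
    unfolding rc_trans_def ses_trans_def by simp
qed

theorem lemma8:
  fixes E :: "'a set" and cfl en :: "('a \<times> 'a) set" and dis :: "('a \<times> 'a \<times> 'a) set"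
  assumes "ses E cfl en dis"
  shows "\<exists>enab. rces E enab \<and> trans_equiv (ses_trans E cfl en dis) (rc_trans E enab)"
proof -
  have "trans_equiv (ses_trans E cfl en dis) (rc_trans E (ses_enabling E cfl en dis))"
    unfolding rc_trans_ses_enabling trans_equiv_def by blast
  then show ?thesis using rces_ses_enabling by blast
qed

end
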